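(* For every integer $n \geq 1$, the number of edges of the finite linear Jaco graph $J_n(x)$ is $$\varepsilon(J_n(x)) \;=\; \sum_{i=1}^{n} \left\lfloor \frac{2(i+1)}{3+\sqrt{5}} \right\rfloor .$$ (Equivalently, the sequence $(\varepsilon(J_n(x)))_{n\ge 1}$ is OEIS sequence A183137 with its $n=0$ term omitted.)
   Context: The finite linear Jaco graph $J_n(x)$ is the simple undirected graph on the vertex set $\{v_1,\dots,v_n\}$ defined as follows. $J_1(x)$ is the single vertex $v_1$. $J_2(x)$ is the single edge $v_1v_2$. For $n \geq 3$, start from the graph on $\{v_1,\dots,v_n\}$ with exactly the two edges $v_1v_2$ and $v_2v_3$. Then, for $i = 3,4,\dots,n-1$ in increasing order, let $d_i$ be the current degree of $v_i$ and add the edges $v_iv_{i+1}, v_iv_{i+2},\dots,v_iv_{i+t}$, where $t$ is the largest integer with $i+t \le n$ such that after adding these edges the degree of $v_i$ is at most $i$ (that is, $t=\max(0,\min(i-d_i,\,n-i))$). The graph obtained after step $i=n-1$ is $J_n(x)$. $\varepsilon(G)$ denotes the number of edges of a graph $G$. *)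

theory Defs
  imports Complex_Main
begin

text \<open>Simple undirected graphs on vertices 1..n; an edge is a 2-element set of vertices.\<close>

definition jaco_deg :: "nat set set \<Rightarrow> nat \<Rightarrow> nat" where
  "jaco_deg E v = card {e \<in> E. v \<in> e}"

text \<open>Step i: add edges v_i v_{i+1}, ..., v_i v_{i+t} with t = max 0 (min (i - d_i) (n - i)).
  Natural-number subtraction truncates at 0, which realizes the max with 0.\<close>
definition jaco_step :: "nat \<Rightarrow> nat set set \<Rightarrow> nat \<Rightarrow> nat set set" where
  "jaco_step n E i = E \<union> {{i, j} | j. i < j \<and> j \<le> i + min (i - jaco_deg E i) (n - i)}"

definition jaco_edges :: "nat \<Rightarrow> nat set set" where
  "jaco_edges n =
     (if n \<le> 1 then {}
      else if n = 2 then {{1, 2}}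
      else foldl (jaco_step n) {{1, 2}, {2, 3}} [3..<n])"

definition jaco_vertices :: "nat \<Rightarrow> nat set" where
  "jaco_vertices n = {1..n}"

end

theory Submission
  imports Defs
begin

(* Let g = (sqrt 5 - 1) / 2, so that g (1 + g) = 1, and f i = floor ((i + 1) g). As g is irrational,
   f i <= j holds iff i <= j + f j. Consequently, if every vertex v_a before v_k has been joined to
   v_(a+1), ..., v_(min n (a + f a)), then v_k has exactly the k - f k neighbours v_(f k), ..., v_(k-1)
   when its step starts, and the step joins it to v_(k+1), ..., v_(min n (k + f k)). Counting edges
   by their larger end point gives the sum of b - f b, and b - f b is the floor of
   (b + 1)(1 - g) = 2 (b + 1) / (3 + sqrt 5) because (b + 1) g is not an integer. *)

lemma sqrt_5_not_rat: "sqrt 5 \<notin> \<rat>"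
proof
  assume "sqrt 5 \<in> \<rat>"
  then obtain m n :: nat where "n \<noteq> 0" and sqrt_5: "\<bar>sqrt 5\<bar> = m / n" and "coprime m n"
    by (rule Rats_abs_nat_div_natE)
  have "real m = sqrt 5 * real n"
    using sqrt_5 \<open>n \<noteq> 0\<close> by (simp add: field_simps)
  then have "(real m)\<^sup>2 = (sqrt 5)\<^sup>2 * (real n)\<^sup>2"
    by (simp add: power_mult_distrib)
  then have "real (m\<^sup>2) = real (5 * n\<^sup>2)"
    by simp
  then have m_sq: "m\<^sup>2 = 5 * n\<^sup>2"
    by (simp only: of_nat_eq_iff)
  have "coprime (m\<^sup>2) (n\<^sup>2)"
    using \<open>coprime m n\<close> by simp
  moreover have "n\<^sup>2 dvd m\<^sup>2"
    using m_sq by simp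
  ultimately have "is_unit (n\<^sup>2)"
    by (metis coprime_absorb_right)
  then have "m\<^sup>2 = 5"
    using m_sq by simp
  then have "m\<^sup>2 < 3\<^sup>2"
    by simp
  then have "m < 3"
    by (rule power_less_imp_less_base) simp
  then have "m \<in> {0, 1, 2}"
    by auto
  with \<open>m\<^sup>2 = 5\<close> show False
    by auto
qed

definition golden_inv :: real where
  "golden_inv = (sqrt 5 - 1) / 2"

lemma golden_inv_quadratic: "golden_inv * (1 + golden_inv) = 1"
  unfolding golden_inv_def by (simp add: field_simps)

lemma golden_inv_bounds: "1 / 2 < golden_inv" "golden_inv < 2 / 3"
proof -
  have "2 < sqrt 5"
    by (rule real_less_rsqrt) simp
  moreover have "sqrt 5 < 7 / 3"
    by (rule real_less_lsqrt) (simp_all add: power2_eq_square)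
  ultimately show "1 / 2 < golden_inv" "golden_inv < 2 / 3"
    unfolding golden_inv_def by simp_all
qed

lemma of_nat_mult_golden_inv_not_Ints:
  assumes "k > 0"
  shows "real k * golden_inv \<notin> \<int>"
proof
  assume "real k * golden_inv \<in> \<int>"
  then obtain m where m: "real k * golden_inv = of_int m"
    by (elim Ints_cases)
  have "sqrt 5 = (2 * of_int m + real k) / real k"
    using m assms unfolding golden_inv_def by (simp add: field_simps)
  also have "\<dots> \<in> \<rat>"
    by simp
  finally show False
    using sqrt_5_not_rat by simp
qed

definition jaco_fwd :: "nat \<Rightarrow> nat" where
  "jaco_fwd i = nat \<lfloor>real (Suc i) * golden_inv\<rfloor>"

lemma jaco_fwd_le_iff_less: "jaco_fwd i \<le> j \<longleftrightarrow> real (Suc i) * golden_inv < real (Suc j)"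
  unfolding jaco_fwd_def by (simp add: nat_le_iff floor_less_iff) linarith

lemma le_add_jaco_fwd_iff_less:
  "i \<le> j + jaco_fwd j \<longleftrightarrow> real (Suc i) < real (Suc j) * (1 + golden_inv)"
proof -
  define x where "x = real (Suc j) * golden_inv"
  have "x \<ge> 0"
    using golden_inv_bounds by (simp add: x_def)
  then have "i \<le> j + jaco_fwd j \<longleftrightarrow> int i - int j \<le> \<lfloor>x\<rfloor>"
    unfolding jaco_fwd_def x_def[symmetric] by linarith
  also have "\<dots> \<longleftrightarrow> real i - real j \<le> x"
    by (simp add: le_floor_iff)
  also have "\<dots> \<longleftrightarrow> real i - real j < x"
  proof -
    have "x \<notin> \<int>"
      unfolding x_def by (rule of_nat_mult_golden_inv_not_Ints) simp
    then have "real i - real j \<noteq> x"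
      by (metis Ints_diff Ints_of_nat)
    then show ?thesis
      by auto
  qed
  also have "\<dots> \<longleftrightarrow> real (Suc i) < real (Suc j) * (1 + golden_inv)"
    unfolding x_def by (simp add: algebra_simps)
  finally show ?thesis .
qed

(* A Beatty-type complementarity; both sides say (i + 1) * golden_inv < j + 1. *)
lemma jaco_fwd_le_iff: "jaco_fwd i \<le> j \<longleftrightarrow> i \<le> j + jaco_fwd j"
proof -
  have "real (Suc i) < real (Suc j) * (1 + golden_inv) \<longleftrightarrow>
        real (Suc i) * golden_inv < real (Suc j) * (1 + golden_inv) * golden_inv"
    using golden_inv_bounds by simp
  also have "real (Suc j) * (1 + golden_inv) * golden_inv = real (Suc j)"
    using golden_inv_quadratic by (simp add: mult.commute mult.left_commute)
  finally show ?thesis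
    unfolding jaco_fwd_le_iff_less le_add_jaco_fwd_iff_less by simp
qed

lemma jaco_fwd_le: "jaco_fwd i \<le> i"
  using jaco_fwd_le_iff[of i i] by simp

lemma jaco_fwd_small: "jaco_fwd 0 = 0" "jaco_fwd 1 = 1" "jaco_fwd 2 = 1"
proof -
  have "\<lfloor>golden_inv\<rfloor> = 0" "\<lfloor>2 * golden_inv\<rfloor> = 1" "\<lfloor>3 * golden_inv\<rfloor> = 1"
    using golden_inv_bounds by (simp_all add: floor_eq_iff)
  then show "jaco_fwd 0 = 0" "jaco_fwd 1 = 1" "jaco_fwd 2 = 1"
    by (simp_all add: jaco_fwd_def)
qed

(* The edge set when the step of v_k begins. *)
definition jaco_edges_before :: "nat \<Rightarrow> nat \<Rightarrow> nat set set" where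
  "jaco_edges_before n k = {{a, b} | a b. a < b \<and> a < k \<and> b \<le> n \<and> b \<le> a + jaco_fwd a}"

lemma jaco_edges_before_doubleton:
  assumes "e \<in> jaco_edges_before n k"
  obtains a b where "e = {a, b}" "a < b"
  using assms unfolding jaco_edges_before_def by blast

lemma doubleton_mem_jaco_edges_before:
  assumes "a < b"
  shows "{a, b} \<in> jaco_edges_before n k \<longleftrightarrow> a < k \<and> b \<le> n \<and> b \<le> a + jaco_fwd a"
  using assms unfolding jaco_edges_before_def by (auto simp: doubleton_eq_iff)

lemma doubleton_mem_jaco_edges_before_backward:
  assumes "a < b"
  shows "{a, b} \<in> jaco_edges_before n k \<longleftrightarrow> a < k \<and> b \<le> n \<and> jaco_fwd b \<le> a"
  using assms by (simp add: doubleton_mem_jaco_edges_before jaco_fwd_le_iff)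

lemma jaco_edges_before_mono: "k \<le> k' \<Longrightarrow> jaco_edges_before n k \<subseteq> jaco_edges_before n k'"
  unfolding jaco_edges_before_def by (blast intro: less_le_trans)

lemma jaco_edges_before_incident:
  assumes "k \<le> n"
  shows "{e \<in> jaco_edges_before n k. k \<in> e} = (\<lambda>a. {a, k}) ` {jaco_fwd k..<k}"
proof (intro set_eqI iffI)
  fix e
  assume e: "e \<in> {e \<in> jaco_edges_before n k. k \<in> e}"
  then obtain a b where ab: "e = {a, b}" "a < b"
    by (auto elim: jaco_edges_before_doubleton)
  with e have "b = k" "jaco_fwd k \<le> a"
    by (auto simp: doubleton_mem_jaco_edges_before_backward)
  with ab show "e \<in> (\<lambda>a. {a, k}) ` {jaco_fwd k..<k}"
    by auto
next
  fix e
  assume "e \<in> (\<lambda>a. {a, k}) ` {jaco_fwd k..<k}"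
  with assms show "e \<in> {e \<in> jaco_edges_before n k. k \<in> e}"
    by (auto simp: doubleton_mem_jaco_edges_before_backward)
qed

lemma jaco_edges_before_self:
  "jaco_edges_before n n = (\<Union>b\<in>{1..n}. (\<lambda>a. {a, b}) ` {jaco_fwd b..<b})"
proof (intro set_eqI iffI)
  fix e
  assume e: "e \<in> jaco_edges_before n n"
  then obtain a b where ab: "e = {a, b}" "a < b"
    by (rule jaco_edges_before_doubleton)
  with e have "b \<in> {1..n}" "a \<in> {jaco_fwd b..<b}"
    by (auto simp: doubleton_mem_jaco_edges_before_backward)
  with ab show "e \<in> (\<Union>b\<in>{1..n}. (\<lambda>a. {a, b}) ` {jaco_fwd b..<b})"
    by blast
next
  fix e
  assume "e \<in> (\<Union>b\<in>{1..n}. (\<lambda>a. {a, b}) ` {jaco_fwd b..<b})"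
  then show "e \<in> jaco_edges_before n n"
    by (auto simp: doubleton_mem_jaco_edges_before_backward)
qed

lemma card_jaco_edges_before_self:
  "card (jaco_edges_before n n) = (\<Sum>b = 1..n. b - jaco_fwd b)"
proof -
  have inj: "inj_on (\<lambda>a. {a, b}) {jaco_fwd b..<b}" for b
    by (auto simp: inj_on_def doubleton_eq_iff)
  have "card (jaco_edges_before n n) = (\<Sum>b = 1..n. card ((\<lambda>a. {a, b}) ` {jaco_fwd b..<b}))"
    unfolding jaco_edges_before_self by (rule card_UN_disjoint) (auto simp: doubleton_eq_iff)
  then show ?thesis
    by (simp add: card_image[OF inj])
qed

lemma jaco_deg_jaco_edges_before:
  assumes "k \<le> n"
  shows "jaco_deg (jaco_edges_before n k) k = k - jaco_fwd k"
proof -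
  have "inj_on (\<lambda>a. {a, k}) {jaco_fwd k..<k}"
    by (auto simp: inj_on_def doubleton_eq_iff)
  then show ?thesis
    unfolding jaco_deg_def jaco_edges_before_incident[OF assms] by (simp add: card_image)
qed

lemma jaco_step_jaco_edges_before:
  assumes "k < n"
  shows "jaco_step n (jaco_edges_before n k) k = jaco_edges_before n (Suc k)"
proof -
  have "k - jaco_deg (jaco_edges_before n k) k = jaco_fwd k"
    using assms jaco_deg_jaco_edges_before[of k n] jaco_fwd_le[of k] by simp
  then have "jaco_step n (jaco_edges_before n k) k =
      jaco_edges_before n k \<union> {{k, j} | j. k < j \<and> j \<le> n \<and> j \<le> k + jaco_fwd k}"
    unfolding jaco_step_def using assms by auto
  also have "\<dots> = jaco_edges_before n (Suc k)"
  proof (intro set_eqI iffI)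
    fix e
    assume "e \<in> jaco_edges_before n k \<union> {{k, j} | j. k < j \<and> j \<le> n \<and> j \<le> k + jaco_fwd k}"
    then show "e \<in> jaco_edges_before n (Suc k)"
      using jaco_edges_before_mono[of k "Suc k" n] by (auto simp: doubleton_mem_jaco_edges_before)
  next
    fix e
    assume e: "e \<in> jaco_edges_before n (Suc k)"
    then obtain a b where ab: "e = {a, b}" "a < b"
      by (rule jaco_edges_before_doubleton)
    show "e \<in> jaco_edges_before n k \<union> {{k, j} | j. k < j \<and> j \<le> n \<and> j \<le> k + jaco_fwd k}"
      using e ab by (cases "a = k") (auto simp: doubleton_mem_jaco_edges_before)
  qed
  finally show ?thesis .
qed

lemma foldl_jaco_step_jaco_edges_before:
  assumes "m \<le> k" "k \<le> n"
  shows "foldl (jaco_step n) (jaco_edges_before n m) [m..<k] = jaco_edges_before n k"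
  using assms
proof (induction k rule: dec_induct)
  case base
  show ?case
    by simp
next
  case (step k)
  then show ?case
    by (simp add: jaco_step_jaco_edges_before)
qed

lemma jaco_edges_before_3:
  assumes "3 \<le> n"
  shows "jaco_edges_before n 3 = {{1, 2}, {2, 3}}"
proof (intro set_eqI iffI)
  fix e
  assume e: "e \<in> jaco_edges_before n 3"
  then obtain a b where ab: "e = {a, b}" "a < b"
    by (rule jaco_edges_before_doubleton)
  with e have "a < 3" "b \<le> a + jaco_fwd a"
    by (simp_all add: doubleton_mem_jaco_edges_before)
  then have "a = 1 \<and> b = 2 \<or> a = 2 \<and> b = 3"
    using ab(2) jaco_fwd_small by (auto simp: less_Suc_eq numeral_eq_Suc)
  with ab show "e \<in> {{1, 2}, {2, 3}}"
    by auto
next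
  fix e :: "nat set"
  assume "e \<in> {{1, 2}, {2, 3}}"
  with assms show "e \<in> jaco_edges_before n 3"
    using jaco_fwd_small by (auto simp: doubleton_mem_jaco_edges_before)
qed

lemma jaco_edges_eq_jaco_edges_before: "jaco_edges n = jaco_edges_before n n"
proof (cases "n \<le> 2")
  case True
  then consider "n = 0" | "n = 1" | "n = 2"
    by linarith
  then show ?thesis
  proof cases
    case 3
    then show ?thesis
      using jaco_fwd_small
      by (simp add: jaco_edges_def jaco_edges_before_self numeral_2_eq_2 atLeastAtMostSuc_conv)
  qed (use jaco_fwd_small in \<open>simp_all add: jaco_edges_def jaco_edges_before_self\<close>)
next
  case False
  then show ?thesis
    using foldl_jaco_step_jaco_edges_before[of 3 n n]
    by (simp add: jaco_edges_def jaco_edges_before_3)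
qed

lemma floor_of_int_diff_not_Ints:
  fixes x :: "'a :: floor_ceiling"
  assumes "x \<notin> \<int>"
  shows "\<lfloor>of_int k - x\<rfloor> = k - \<lfloor>x\<rfloor> - 1"
proof -
  have "of_int \<lfloor>x\<rfloor> < x"
    using assms by (metis Ints_of_int of_int_floor_le order_le_less)
  then show ?thesis
    by (simp add: floor_eq_iff) linarith
qed

lemma floor_jaco_term: "\<lfloor>2 * (real i + 1) / (3 + sqrt 5)\<rfloor> = int i - int (jaco_fwd i)"
proof -
  define x where "x = real (Suc i) * golden_inv"
  have "0 < 3 + sqrt 5"
    by (simp add: add_pos_nonneg)
  then have "2 / (3 + sqrt 5) = 1 - golden_inv"
    unfolding golden_inv_def by (simp add: field_simps)
  then have "2 * (real i + 1) / (3 + sqrt 5) = (real i + 1) * (1 - golden_inv)"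
    by (metis times_divide_eq_right mult.commute)
  also have "\<dots> = of_int (int (Suc i)) - x"
    unfolding x_def by (simp add: algebra_simps)
  finally have "2 * (real i + 1) / (3 + sqrt 5) = of_int (int (Suc i)) - x" .
  moreover have "x \<notin> \<int>"
    unfolding x_def by (rule of_nat_mult_golden_inv_not_Ints) simp
  moreover have "int (jaco_fwd i) = \<lfloor>x\<rfloor>"
    using golden_inv_bounds by (simp add: jaco_fwd_def x_def)
  ultimately show ?thesis
    using floor_of_int_diff_not_Ints[of x "int (Suc i)"] by simp
qed

theorem proposition1:
  fixes n :: nat
  assumes "n \<ge> 1"
  shows "int (card (jaco_edges n)) =
         (\<Sum>i = 1..n. \<lfloor>2 * (real i + 1) / (3 + sqrt 5)\<rfloor>)"
proof -
  have "int (card (jaco_edges n)) = (\<Sum>i = 1..n. int (i - jaco_fwd i))"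
    by (simp add: jaco_edges_eq_jaco_edges_before card_jaco_edges_before_self of_nat_sum)
  also have "\<dots> = (\<Sum>i = 1..n. \<lfloor>2 * (real i + 1) / (3 + sqrt 5)\<rfloor>)"
    by (intro sum.cong refl) (metis floor_jaco_term jaco_fwd_le of_nat_diff)
  finally show ?thesis .
qed

end
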